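(* Let $\mathcal{D}=(D,B,\mu)$ be a blueprint. For any $\varepsilon>0$, $$\mathsf{Soundness}(\mathcal{D})\le\mathsf{Soundness}_\varepsilon(\mathcal{D})\le\mathsf{Soundness}(\mathcal{D})+|B|\varepsilon.$$
   Context: $\Phi$ is the standard normal CDF. For $\rho\in[-1,1]$, $\Gamma_\rho(q_1,q_2)=\Pr[x\le\Phi^{-1}(q_1),\,y\le\Phi^{-1}(q_2)]$ for jointly Gaussian standard normals $x,y$ with correlation $\rho$. A configuration is $\theta=(b_i,b_j,b_{ij})\in[-1,1]^3$ with $-1+|b_i+b_j|\le b_{ij}\le1-|b_i-b_j|$. Its relative pairwise bias is $\rho(\theta)=\frac{b_{ij}-b_ib_j}{\sqrt{(1-b_i^2)(1-b_j^2)}}$ (or $0$ if the denominator is $0$). A blueprint $\mathcal{D}=(D,B,\mu)$: $D$ a finitely supported distribution on configurations, $B$ the set of biases (first two coordinates) appearing in its support, $\mu$ a probability measure on $B$ with $\sum_b\mu(b)b=0$. A threshold function $t:B\to[-1,1]$ is balanced for $\mathcal{D}$ if $\sum_{b\in B}\mu(b)t(b)=0$ and $\varepsilon$-almost balanced if $|\sum_{b\in B}\mu(b)t(b)|\le\varepsilon$. $\mathsf{Soundness}(\mathcal{D},t)=\mathbb{E}_{\theta=(b_i,b_j,b_{ij})\sim D}[\frac{1-t(b_i)}{2}+\frac{1-t(b_j)}{2}-2\Gamma_{\rho(\theta)}(\frac{1-t(b_i)}{2},\frac{1-t(b_j)}{2})]$; $\mathsf{Soundness}(\mathcal{D})$ is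 its maximum over balanced $t$ and $\mathsf{Soundness}_\varepsilon(\mathcal{D})$ its maximum over $\varepsilon$-almost balanced $t$. *)

theory Defs
  imports "HOL-Probability.Probability"
begin

definition gauss :: "real measure" where
  "gauss = density lborel (\<lambda>x. ennreal (std_normal_density x))"

definition Phi :: "real \<Rightarrow> real" where
  "Phi x = measure gauss {..x}"

text \<open>Gamma_rho(q1,q2) = Pr[x <= Phi^-1(q1), y <= Phi^-1(q2)] for standard normals x, y
  with correlation rho.  We realise y = rho x + sqrt(1 - rho^2) z with x, z independent
  standard normals, and use that (for q in [0,1]) x <= Phi^-1(q) iff Phi x <= q
  (with Phi^-1(0) = -infinity and Phi^-1(1) = +infinity).\<close>
definition Gamma :: "real \<Rightarrow> real \<Rightarrow> real \<Rightarrow> real" where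
  "Gamma \<rho> q1 q2 = measure (gauss \<Otimes>\<^sub>M gauss)
     {(x, z). Phi x \<le> q1 \<and> Phi (\<rho> * x + sqrt (1 - \<rho>\<^sup>2) * z) \<le> q2}"

type_synonym config = "real \<times> real \<times> real"

definition valid_config :: "config \<Rightarrow> bool" where
  "valid_config \<theta> = (case \<theta> of (b_i, b_j, b_ij) \<Rightarrow>
     b_i \<in> {-1..1} \<and> b_j \<in> {-1..1} \<and> b_ij \<in> {-1..1} \<and>
     -1 + \<bar>b_i + b_j\<bar> \<le> b_ij \<and> b_ij \<le> 1 - \<bar>b_i - b_j\<bar>)"

definition rel_bias :: "config \<Rightarrow> real" where
  "rel_bias \<theta> = (case \<theta> of (b_i, b_j, b_ij) \<Rightarrow>
     (let d = sqrt ((1 - b_i\<^sup>2) * (1 - b_j\<^sup>2)) in if d = 0 then 0 else (b_ij - b_i * b_j) / d))"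

definition biases :: "config pmf \<Rightarrow> real set" where
  "biases D = (\<Union>(b_i, b_j, b_ij) \<in> set_pmf D. {b_i, b_j})"

definition blueprint :: "config pmf \<Rightarrow> (real \<Rightarrow> real) \<Rightarrow> bool" where
  "blueprint D \<mu> \<longleftrightarrow> finite (set_pmf D) \<and> (\<forall>\<theta>\<in>set_pmf D. valid_config \<theta>) \<and>
     (\<forall>b\<in>biases D. \<mu> b \<ge> 0) \<and> (\<Sum>b\<in>biases D. \<mu> b) = 1 \<and>
     (\<Sum>b\<in>biases D. \<mu> b * b) = 0"

definition threshold :: "config pmf \<Rightarrow> (real \<Rightarrow> real) \<Rightarrow> bool" where
  "threshold D t \<longleftrightarrow> (\<forall>b\<in>biases D. t b \<in> {-1..1})"

definition almost_balanced :: "real \<Rightarrow> config pmf \<Rightarrow> (real \<Rightarrow> real) \<Rightarrow> (real \<Rightarrow> real) \<Rightarrow> bool" where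
  "almost_balanced \<epsilon> D \<mu> t \<longleftrightarrow> threshold D t \<and> \<bar>\<Sum>b\<in>biases D. \<mu> b * t b\<bar> \<le> \<epsilon>"

definition balanced :: "config pmf \<Rightarrow> (real \<Rightarrow> real) \<Rightarrow> (real \<Rightarrow> real) \<Rightarrow> bool" where
  "balanced D \<mu> t \<longleftrightarrow> threshold D t \<and> (\<Sum>b\<in>biases D. \<mu> b * t b) = 0"

definition soundness_t :: "config pmf \<Rightarrow> (real \<Rightarrow> real) \<Rightarrow> real" where
  "soundness_t D t = measure_pmf.expectation D (\<lambda>\<theta>. case \<theta> of (b_i, b_j, b_ij) \<Rightarrow>
     (1 - t b_i) / 2 + (1 - t b_j) / 2 - 2 * Gamma (rel_bias \<theta>) ((1 - t b_i) / 2) ((1 - t b_j) / 2))"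

definition soundness :: "config pmf \<Rightarrow> (real \<Rightarrow> real) \<Rightarrow> real" where
  "soundness D \<mu> = (SUP t \<in> {t. balanced D \<mu> t}. soundness_t D t)"

definition soundness_eps :: "real \<Rightarrow> config pmf \<Rightarrow> (real \<Rightarrow> real) \<Rightarrow> real" where
  "soundness_eps \<epsilon> D \<mu> = (SUP t \<in> {t. almost_balanced \<epsilon> D \<mu> t}. soundness_t D t)"

end

theory Submission
  imports Defs
begin

text \<open>
  Every balanced threshold function is \<open>\<epsilon>\<close>-almost balanced, which gives the first inequality.
  Conversely, an almost balanced \<open>t\<close> with weighted mean \<open>s \<ge> 0\<close> is rebalanced by
  \<open>t' = (t - s) / (1 + s)\<close>, a convex combination of \<open>t\<close> and the constant \<open>-1\<close>; every threshold
  moves down, by at most \<open>|B| s\<close> (symmetrically for \<open>s < 0\<close>). Per configuration the soundness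
  integrand is \<open>q\<^sub>1 + q\<^sub>2 - 2 \<Gamma>\<^sub>\<rho>(q\<^sub>1, q\<^sub>2)\<close>. Since both Gaussians \<open>x\<close> and \<open>\<rho> x + \<surd>(1 - \<rho>\<^sup>2) z\<close> are
  standard normal, \<open>\<Phi>\<close> of each is uniform on \<open>[0, 1]\<close>, so \<open>\<Gamma>\<^sub>\<rho>\<close> is monotone and grows by at most
  the increments of its arguments. Hence moving both arguments in the same direction changes
  the integrand by at most the size of the move, and the soundness by at most \<open>|B| \<epsilon>\<close>.
\<close>

lemma (in real_distribution) cdf_le_eq_atMost:
  assumes no_atoms: "\<And>x. measure M {x} = 0" and "q < 1" and ne: "{x. cdf M x \<le> q} \<noteq> {}"
  obtains c where "{x. cdf M x \<le> q} = {..c}" "cdf M c = q"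
proof -
  let ?A = "{x. cdf M x \<le> q}"
  obtain b where b: "\<And>x. b \<le> x \<Longrightarrow> q < cdf M x"
    using order_tendstoD(1)[OF cdf_lim_at_top_prob \<open>q < 1\<close>]
    by (auto simp: eventually_at_top_linorder)
  then have bdd: "bdd_above ?A"
    by (intro bdd_aboveI[of _ b]) (meson b linorder_not_le not_less_iff_gr_or_eq mem_Collect_eq)
  define c where "c = Sup ?A"
  have "closed ?A"
    using isCont_cdf no_atoms by (intro closed_Collect_le continuous_at_imp_continuous_on) auto
  then have "c \<in> ?A"
    unfolding c_def using closed_contains_Sup[OF ne bdd] by blast
  then have A_eq: "?A = {..c}"
    using bdd cdf_nondecreasing unfolding c_def by (auto intro: cSup_upper order_trans)
  have "\<forall>\<^sub>F y in at_right c. q \<le> cdf M y"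
  proof (rule eventually_mono[OF eventually_at_right_less])
    fix y assume "c < y"
    then have "y \<notin> ?A"
      using A_eq by simp
    then show "q \<le> cdf M y"
      by simp
  qed
  then have "q \<le> cdf M c"
    using cdf_is_right_cont by (intro tendsto_lowerbound) (auto simp: continuous_within)
  with \<open>c \<in> ?A\<close> have "cdf M c = q"
    by simp
  with A_eq show thesis
    by (rule that)
qed

lemma (in real_distribution) measure_cdf_le_eq:
  assumes no_atoms: "\<And>x. measure M {x} = 0" and "0 \<le> q" "q \<le> 1"
  shows "measure M {x. cdf M x \<le> q} = q"
proof (cases "q = 1")
  case True
  then have "{x. cdf M x \<le> q} = space M"
    using cdf_bounded_prob by auto
  then show ?thesis
    using True prob_space by simp
next
  case False
  show ?thesis
  proof (cases "{x. cdf M x \<le> q} = {}")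
    case True
    have "\<not> 0 < q"
    proof
      assume "0 < q"
      then obtain a where "cdf M a < q"
        using order_tendstoD(2)[OF cdf_lim_at_bot] by (auto simp: eventually_at_bot_linorder)
      then have "a \<in> {x. cdf M x \<le> q}"
        by simp
      with True show False
        by simp
    qed
    with True \<open>0 \<le> q\<close> show ?thesis
      by simp
  next
    case False
    have "q < 1"
      using \<open>q \<noteq> 1\<close> \<open>q \<le> 1\<close> by simp
    then obtain c where "{x. cdf M x \<le> q} = {..c}" "cdf M c = q"
      using cdf_le_eq_atMost[OF no_atoms _ False] by blast
    then show ?thesis
      by (simp add: cdf_def)
  qed
qed

lemma real_distribution_gauss: "real_distribution gauss"
  unfolding gauss_def by (rule real_dist_normal_dist)

lemma prob_space_gauss: "prob_space gauss"
  using real_distribution_gauss by (simp add: real_distribution_def)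

lemma sets_gauss [simp, measurable_cong]: "sets gauss = sets borel"
  by (simp add: gauss_def)

lemma Phi_eq_cdf: "Phi = cdf gauss"
  by (simp add: Phi_def cdf_def fun_eq_iff)

lemma measure_gauss_singleton: "measure gauss {x} = 0"
proof -
  have "emeasure gauss {x} = 0"
    unfolding gauss_def by (subst emeasure_density) (auto intro!: nn_integral_null_set)
  then show ?thesis
    by (simp add: measure_def)
qed

lemma borel_measurable_Phi [measurable]: "Phi \<in> borel_measurable borel"
  unfolding Phi_eq_cdf
  by (intro borel_measurable_mono monoI finite_borel_measure.cdf_nondecreasing
      real_distribution.finite_borel_measure_M real_distribution_gauss)

lemma measure_gauss_Phi_between:
  assumes "0 \<le> q" "q \<le> q'" "q' \<le> 1"
  shows "measure gauss {x. q < Phi x \<and> Phi x \<le> q'} = q' - q"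
proof -
  interpret real_distribution gauss
    by (rule real_distribution_gauss)
  have "{x. q < Phi x \<and> Phi x \<le> q'} = {x. Phi x \<le> q'} - {x. Phi x \<le> q}"
    by auto
  also have "measure gauss \<dots> = measure gauss {x. Phi x \<le> q'} - measure gauss {x. Phi x \<le> q}"
    using assms by (intro finite_measure_Diff) auto
  also have "\<dots> = q' - q"
    using assms measure_cdf_le_eq[OF measure_gauss_singleton] by (simp add: Phi_eq_cdf)
  finally show ?thesis .
qed

abbreviation gauss_pair :: "(real \<times> real) measure" where
  "gauss_pair \<equiv> gauss \<Otimes>\<^sub>M gauss"

lemma pair_prob_space_gauss: "pair_prob_space gauss gauss"
  by (simp add: pair_prob_space.intro pair_sigma_finite_def prob_space_gauss
      prob_space_imp_sigma_finite)

lemma distr_gauss_pair_fst: "distr gauss_pair borel fst = gauss"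
proof -
  interpret prob_space gauss
    by (rule prob_space_gauss)
  have "distr gauss_pair borel fst = distr gauss_pair gauss fst"
    by (rule distr_cong) auto
  then show ?thesis
    using distr_pair_fst by simp
qed

lemma distr_gauss_pair_snd: "distr gauss_pair borel snd = gauss"
proof -
  interpret pair_prob_space gauss gauss
    by (rule pair_prob_space_gauss)
  have "distr gauss_pair borel snd = distr (distr gauss_pair gauss_pair (\<lambda>(x, y). (y, x))) borel snd"
    using distr_pair_swap by simp
  also have "\<dots> = distr gauss_pair borel fst"
    by (subst distr_distr) (auto simp: comp_def case_prod_beta)
  finally show ?thesis
    using distr_gauss_pair_fst by simp
qed

lemma indep_var_gauss_pair: "prob_space.indep_var gauss_pair borel fst borel snd"
proof -
  interpret pair_prob_space gauss gauss
    by (rule pair_prob_space_gauss)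
  have "distr gauss_pair (borel \<Otimes>\<^sub>M borel) (\<lambda>p. (fst p, snd p)) = gauss_pair"
    by (simp add: distr_id2)
  then show ?thesis
    by (simp add: indep_var_distribution_eq distr_gauss_pair_fst distr_gauss_pair_snd)
qed

lemma distributed_gauss_pair_combination:
  assumes "a\<^sup>2 + b\<^sup>2 = 1"
  shows "distributed gauss_pair lborel (\<lambda>p. a * fst p + b * snd p) std_normal_density"
proof -
  interpret pair_prob_space gauss gauss
    by (rule pair_prob_space_gauss)
  have fst: "distributed gauss_pair lborel fst std_normal_density"
    using distr_gauss_pair_fst by (auto simp: distributed_def gauss_def cong: distr_cong)
  have snd: "distributed gauss_pair lborel snd std_normal_density"
    using distr_gauss_pair_snd by (auto simp: distributed_def gauss_def cong: distr_cong)
  consider "a = 0" | "b = 0" | "a \<noteq> 0" "b \<noteq> 0"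
    by blast
  then show ?thesis
  proof cases
    case 1
    then have "\<bar>b\<bar> = 1"
      using assms by (simp add: abs_square_eq_1)
    with 1 show ?thesis
      using normal_density_affine[OF snd, of b 0] by simp
  next
    case 2
    then have "\<bar>a\<bar> = 1"
      using assms by (simp add: abs_square_eq_1)
    with 2 show ?thesis
      using normal_density_affine[OF fst, of a 0] by simp
  next
    case 3
    have "indep_var borel (\<lambda>p. a * fst p) borel (\<lambda>p. b * snd p)"
      using indep_var_compose[unfolded comp_def, OF indep_var_gauss_pair,
          of "\<lambda>x. a * x" borel "\<lambda>x. b * x" borel] by simp
    moreover have "distributed gauss_pair lborel (\<lambda>p. a * fst p) (normal_density 0 \<bar>a\<bar>)"
      using normal_density_affine[OF fst, of a 0] 3 by simp
    moreover have "distributed gauss_pair lborel (\<lambda>p. b * snd p) (normal_density 0 \<bar>b\<bar>)"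
      using normal_density_affine[OF snd, of b 0] 3 by simp
    ultimately have "distributed gauss_pair lborel (\<lambda>p. a * fst p + b * snd p)
        (normal_density (0 + 0) (sqrt (\<bar>a\<bar>\<^sup>2 + \<bar>b\<bar>\<^sup>2)))"
      using 3 by (intro add_indep_normal) auto
    then show ?thesis
      using assms by simp
  qed
qed

lemma measure_gauss_pair_Phi_combination_between:
  assumes "a\<^sup>2 + b\<^sup>2 = 1" and "0 \<le> q" "q \<le> q'" "q' \<le> 1"
  shows "measure gauss_pair
           {p. q < Phi (a * fst p + b * snd p) \<and> Phi (a * fst p + b * snd p) \<le> q'} = q' - q"
proof -
  let ?Y = "\<lambda>p. a * fst p + b * snd p"
  have Y: "?Y \<in> measurable gauss_pair lborel" "distr gauss_pair lborel ?Y = gauss"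
    using distributed_gauss_pair_combination[OF assms(1)] by (auto simp: distributed_def gauss_def)
  have "measure gauss {x. q < Phi x \<and> Phi x \<le> q'} =
        measure gauss_pair (?Y -` {x. q < Phi x \<and> Phi x \<le> q'} \<inter> space gauss_pair)"
    using measure_distr[OF Y(1)] Y(2) by simp
  then show ?thesis
    using measure_gauss_Phi_between[OF assms(2-4)] by (simp add: space_pair_measure gauss_def)
qed

lemma Gamma_eq_measure_pair:
  "Gamma \<rho> q1 q2 = measure gauss_pair
     {p. Phi (fst p) \<le> q1 \<and> Phi (\<rho> * fst p + sqrt (1 - \<rho>\<^sup>2) * snd p) \<le> q2}"
  by (simp add: Gamma_def case_prod_unfold)

lemma Collect_in_sets_gauss_pair:
  assumes "Measurable.pred gauss_pair P"
  shows "{p. P p} \<in> sets gauss_pair"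
  using assms by (simp add: pred_def space_pair_measure gauss_def)

lemma Gamma_mono:
  assumes "q1 \<le> q1'" "q2 \<le> q2'"
  shows "Gamma \<rho> q1 q2 \<le> Gamma \<rho> q1' q2'"
proof -
  interpret pair_prob_space gauss gauss
    by (rule pair_prob_space_gauss)
  have "{p. Phi (fst p) \<le> q1 \<and> Phi (\<rho> * fst p + sqrt (1 - \<rho>\<^sup>2) * snd p) \<le> q2} \<subseteq>
        {p. Phi (fst p) \<le> q1' \<and> Phi (\<rho> * fst p + sqrt (1 - \<rho>\<^sup>2) * snd p) \<le> q2'}"
    using assms by auto
  then show ?thesis
    unfolding Gamma_eq_measure_pair
    by (rule finite_measure_mono[OF _ Collect_in_sets_gauss_pair]) measurable
qed

lemma Gamma_le_add_increments:
  assumes "\<rho>\<^sup>2 \<le> 1"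
    and "0 \<le> q1" "q1 \<le> q1'" "q1' \<le> 1" and "0 \<le> q2" "q2 \<le> q2'" "q2' \<le> 1"
  shows "Gamma \<rho> q1' q2' \<le> Gamma \<rho> q1 q2 + (q1' - q1) + (q2' - q2)"
proof -
  interpret pair_prob_space gauss gauss
    by (rule pair_prob_space_gauss)
  let ?Y = "\<lambda>p. \<rho> * fst p + sqrt (1 - \<rho>\<^sup>2) * snd p"
  let ?A = "\<lambda>q1 q2. {p. Phi (fst p) \<le> q1 \<and> Phi (?Y p) \<le> q2}"
  \<comment> \<open>\<open>fst\<close> in the shape \<open>1 * fst + 0 * snd\<close> of \<open>measure_gauss_pair_Phi_combination_between\<close>\<close>
  let ?B1 = "{p. q1 < Phi (1 * fst p + 0 * snd p) \<and> Phi (1 * fst p + 0 * snd p) \<le> q1'}"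
  let ?B2 = "{p. q2 < Phi (?Y p) \<and> Phi (?Y p) \<le> q2'}"
  have sets: "?A q1 q2 \<in> events" "?B1 \<in> events" "?B2 \<in> events"
    by (rule Collect_in_sets_gauss_pair; measurable)+
  have "measure gauss_pair (?A q1' q2') \<le> measure gauss_pair (?A q1 q2 \<union> ?B1 \<union> ?B2)"
    using sets by (intro finite_measure_mono) auto
  also have "\<dots> \<le> measure gauss_pair (?A q1 q2) + measure gauss_pair ?B1 + measure gauss_pair ?B2"
    using sets by (meson add_right_mono measure_Un_le order_trans sets.Un)
  also have "measure gauss_pair ?B1 = q1' - q1"
    using assms by (intro measure_gauss_pair_Phi_combination_between) auto
  also have "measure gauss_pair ?B2 = q2' - q2"
    using assms by (intro measure_gauss_pair_Phi_combination_between) auto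
  finally show ?thesis
    unfolding Gamma_eq_measure_pair .
qed

text \<open>The probability that exactly one of the events \<open>x \<le> \<Phi>\<^sup>-\<^sup>1(q\<^sub>1)\<close>, \<open>y \<le> \<Phi>\<^sup>-\<^sup>1(q\<^sub>2)\<close> occurs.\<close>

definition cut_prob :: "real \<Rightarrow> real \<Rightarrow> real \<Rightarrow> real" where
  "cut_prob \<rho> q1 q2 = q1 + q2 - 2 * Gamma \<rho> q1 q2"

lemma cut_prob_le_add: "cut_prob \<rho> q1 q2 \<le> q1 + q2"
  by (simp add: cut_prob_def Gamma_def)

lemma cut_prob_le_comonotone_shift:
  assumes "\<rho>\<^sup>2 \<le> 1" and "q1 \<in> {0..1}" "q2 \<in> {0..1}" "q1' \<in> {0..1}" "q2' \<in> {0..1}"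
    and "(q1 \<le> q1' \<and> q2 \<le> q2') \<or> (q1' \<le> q1 \<and> q2' \<le> q2)"
  shows "cut_prob \<rho> q1 q2 \<le> cut_prob \<rho> q1' q2' + \<bar>q1 - q1'\<bar> + \<bar>q2 - q2'\<bar>"
  using assms(6)
proof
  assume up: "q1 \<le> q1' \<and> q2 \<le> q2'"
  then have "Gamma \<rho> q1' q2' \<le> Gamma \<rho> q1 q2 + (q1' - q1) + (q2' - q2)"
    using assms by (intro Gamma_le_add_increments) auto
  with up show ?thesis
    by (simp add: cut_prob_def)
next
  assume down: "q1' \<le> q1 \<and> q2' \<le> q2"
  then have "Gamma \<rho> q1' q2' \<le> Gamma \<rho> q1 q2"
    by (intro Gamma_mono) auto
  with down show ?thesis
    by (simp add: cut_prob_def)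
qed

lemma min_power2_le_mult:
  fixes a b :: "'a::linordered_idom"
  assumes "0 \<le> a" "0 \<le> b"
  shows "(min a b)\<^sup>2 \<le> a * b"
  using assms by (auto simp: min_def power2_eq_square intro: mult_mono)

lemma valid_config_covariance_power2_le:
  assumes "valid_config (x, y, c)"
  shows "(c - x * y)\<^sup>2 \<le> (1 - x\<^sup>2) * (1 - y\<^sup>2)"
proof -
  have x: "-1 \<le> x" "x \<le> 1" and y: "-1 \<le> y" "y \<le> 1"
    and lo: "-1 + \<bar>x + y\<bar> \<le> c" and hi: "c \<le> 1 - \<bar>x - y\<bar>"
    using assms by (auto simp: valid_config_def)
  have upper: "c - x * y \<le> min ((1 - x) * (1 + y)) ((1 + x) * (1 - y))"
    using hi abs_ge_self[of "x - y"] abs_ge_minus_self[of "x - y"]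
    by (simp add: algebra_simps)
  have lower: "x * y - c \<le> min ((1 - x) * (1 - y)) ((1 + x) * (1 + y))"
    using lo abs_ge_self[of "x + y"] abs_ge_minus_self[of "x + y"]
    by (simp add: algebra_simps)
  show ?thesis
  proof (cases "0 \<le> c - x * y")
    case True
    then have "(c - x * y)\<^sup>2 \<le> (min ((1 - x) * (1 + y)) ((1 + x) * (1 - y)))\<^sup>2"
      using upper by (intro power_mono) auto
    also have "\<dots> \<le> (1 - x) * (1 + y) * ((1 + x) * (1 - y))"
      using x y by (intro min_power2_le_mult) auto
    finally show ?thesis
      by (simp add: power2_eq_square algebra_simps)
  next
    case False
    then have "(c - x * y)\<^sup>2 \<le> (min ((1 - x) * (1 - y)) ((1 + x) * (1 + y)))\<^sup>2"
      using lower by (subst power2_commute) (intro power_mono, auto)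
    also have "\<dots> \<le> (1 - x) * (1 - y) * ((1 + x) * (1 + y))"
      using x y by (intro min_power2_le_mult) auto
    finally show ?thesis
      by (simp add: power2_eq_square algebra_simps)
  qed
qed

lemma abs_rel_bias_le_1:
  assumes "valid_config \<theta>"
  shows "\<bar>rel_bias \<theta>\<bar> \<le> 1"
proof -
  obtain x y c where \<theta>: "\<theta> = (x, y, c)"
    by (cases \<theta>) auto
  define P where "P = (1 - x\<^sup>2) * (1 - y\<^sup>2)"
  have "x\<^sup>2 \<le> 1" "y\<^sup>2 \<le> 1"
    using assms \<theta> by (auto simp: valid_config_def abs_square_le_1)
  then have "0 \<le> P"
    by (simp add: P_def)
  have cov: "\<bar>c - x * y\<bar> \<le> sqrt P"
    unfolding P_def
    using valid_config_covariance_power2_le assms \<theta> real_sqrt_le_mono real_sqrt_abs by metis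
  show ?thesis
  proof (cases "sqrt P = 0")
    case True
    then show ?thesis
      by (simp add: rel_bias_def \<theta> flip: P_def)
  next
    case False
    with \<open>0 \<le> P\<close> have "0 < sqrt P"
      by simp
    with cov show ?thesis
      by (simp add: rel_bias_def \<theta> Let_def abs_divide flip: P_def)
  qed
qed

definition config_cut_prob :: "(real \<Rightarrow> real) \<Rightarrow> config \<Rightarrow> real" where
  "config_cut_prob t \<theta> =
     cut_prob (rel_bias \<theta>) ((1 - t (fst \<theta>)) / 2) ((1 - t (fst (snd \<theta>))) / 2)"

lemma soundness_t_eq_expectation: "soundness_t D t = measure_pmf.expectation D (config_cut_prob t)"
  unfolding soundness_t_def config_cut_prob_def cut_prob_def by (simp add: case_prod_beta)

lemma biases_memI:
  assumes "\<theta> \<in> set_pmf D"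
  shows "fst \<theta> \<in> biases D" "fst (snd \<theta>) \<in> biases D"
  using assms unfolding biases_def by (force simp: case_prod_beta)+

lemma soundness_t_le_2:
  assumes "finite (set_pmf D)" and "threshold D t"
  shows "soundness_t D t \<le> 2"
proof -
  have "config_cut_prob t \<theta> \<le> 2" if "\<theta> \<in> set_pmf D" for \<theta>
  proof -
    have "t (fst \<theta>) \<in> {-1..1}" "t (fst (snd \<theta>)) \<in> {-1..1}"
      using that assms(2) biases_memI by (auto simp: threshold_def)
    then have "(1 - t (fst \<theta>)) / 2 + (1 - t (fst (snd \<theta>))) / 2 \<le> 2"
      by (auto simp: field_simps)
    then show ?thesis
      unfolding config_cut_prob_def using cut_prob_le_add order_trans by blast
  qed
  then have "soundness_t D t \<le> measure_pmf.expectation D (\<lambda>_. 2)"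
    unfolding soundness_t_eq_expectation
    by (intro integral_mono_AE integrable_measure_pmf_finite[OF assms(1)])
      (auto simp: AE_measure_pmf_iff)
  then show ?thesis
    by simp
qed

lemma soundness_t_le_comonotone_shift:
  assumes "finite (set_pmf D)" and "\<forall>\<theta>\<in>set_pmf D. valid_config \<theta>"
    and "threshold D t" "threshold D t'"
    and "(\<forall>b\<in>biases D. t' b \<le> t b) \<or> (\<forall>b\<in>biases D. t b \<le> t' b)"
    and "\<forall>b\<in>biases D. \<bar>t b - t' b\<bar> \<le> K"
  shows "soundness_t D t \<le> soundness_t D t' + K"
proof -
  have pointwise: "config_cut_prob t \<theta> \<le> config_cut_prob t' \<theta> + K" if "\<theta> \<in> set_pmf D" for \<theta>
  proof -
    let ?i = "fst \<theta>" and ?j = "fst (snd \<theta>)"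
    have B: "?i \<in> biases D" "?j \<in> biases D"
      using that by (rule biases_memI)+
    have K: "\<bar>t ?i - t' ?i\<bar> \<le> K" "\<bar>t ?j - t' ?j\<bar> \<le> K"
      using B assms(6) by auto
    have "(rel_bias \<theta>)\<^sup>2 \<le> 1"
      using assms(2) that abs_rel_bias_le_1 by (simp add: abs_square_le_1)
    then have "config_cut_prob t \<theta> \<le> config_cut_prob t' \<theta>
        + \<bar>(1 - t ?i) / 2 - (1 - t' ?i) / 2\<bar> + \<bar>(1 - t ?j) / 2 - (1 - t' ?j) / 2\<bar>"
      unfolding config_cut_prob_def using B assms(3-5)
      by (intro cut_prob_le_comonotone_shift) (auto simp: threshold_def)
    also have "\<dots> = config_cut_prob t' \<theta> + \<bar>t ?i - t' ?i\<bar> / 2 + \<bar>t ?j - t' ?j\<bar> / 2"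
      by (simp add: abs_minus_commute flip: diff_divide_distrib)
    also have "\<dots> \<le> config_cut_prob t' \<theta> + K"
      using K by (simp; linarith)
    finally show ?thesis .
  qed
  have "soundness_t D t \<le> measure_pmf.expectation D (\<lambda>\<theta>. config_cut_prob t' \<theta> + K)"
    unfolding soundness_t_eq_expectation using pointwise
    by (intro integral_mono_AE integrable_measure_pmf_finite[OF assms(1)])
      (auto simp: AE_measure_pmf_iff)
  also have "\<dots> = soundness_t D t' + K"
    unfolding soundness_t_eq_expectation
    by (simp add: integrable_measure_pmf_finite[OF assms(1)])
  finally show ?thesis .
qed

lemma zero_mean_shift_size_le:
  fixes s x n :: real
  assumes "0 \<le> s" "-1 \<le> x" "x \<le> 1" "1 \<le> n" and "x = s \<or> 2 \<le> n"
  shows "s * (x + 1) / (1 + s) \<le> n * s"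
  using assms(5)
proof
  assume "x = s"
  then have "s * (x + 1) / (1 + s) = s"
    using assms(1) by (simp add: add.commute)
  also have "\<dots> \<le> n * s"
    using assms(1,4) mult_right_mono[of 1 n s] by simp
  finally show ?thesis .
next
  assume "2 \<le> n"
  have "s * (x + 1) / (1 + s) \<le> s * (x + 1)"
    using assms(1-3) frac_le[of "s * (x + 1)" "s * (x + 1)" 1 "1 + s"] by simp
  also have "\<dots> \<le> s * 2"
    using assms(1,3) by (intro mult_left_mono) auto
  also have "\<dots> \<le> n * s"
    using assms(1) \<open>2 \<le> n\<close> mult_right_mono[of 2 n s] by (simp add: mult.commute)
  finally show ?thesis .
qed

lemma zero_mean_shift_nonneg:
  fixes \<mu> t :: "'a \<Rightarrow> real"
  assumes "finite B" "\<forall>b\<in>B. 0 \<le> \<mu> b" "(\<Sum>b\<in>B. \<mu> b) = 1" "\<forall>b\<in>B. t b \<in> {-1..1}"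
    and "0 \<le> (\<Sum>b\<in>B. \<mu> b * t b)"
  obtains t' where "\<forall>b\<in>B. t' b \<in> {-1..1}" "(\<Sum>b\<in>B. \<mu> b * t' b) = 0"
    "\<forall>b\<in>B. t' b \<le> t b \<and> t b - t' b \<le> card B * (\<Sum>b\<in>B. \<mu> b * t b)"
proof
  define s where "s = (\<Sum>b\<in>B. \<mu> b * t b)"
  have "0 \<le> s"
    using assms(5) by (simp add: s_def)
  \<comment> \<open>\<open>t' = (1 - l) t + l (-1)\<close> with \<open>l = s / (1 + s)\<close>, the mixing weight that kills the mean\<close>
  define t' where "t' b = (t b - s) / (1 + s)" for b
  have diff: "t b - t' b = s * (t b + 1) / (1 + s)" for b
    using \<open>0 \<le> s\<close> by (simp add: t'_def field_simps)
  have "(\<Sum>b\<in>B. \<mu> b * t' b) = (\<Sum>b\<in>B. \<mu> b * t b - s * \<mu> b) / (1 + s)"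
    unfolding t'_def sum_divide_distrib using \<open>0 \<le> s\<close>
    by (intro sum.cong) (auto simp: field_simps)
  also have "\<dots> = 0"
    using assms(3) by (simp add: sum_subtractf flip: sum_distrib_left s_def)
  finally show "(\<Sum>b\<in>B. \<mu> b * t' b) = 0" .
  show "\<forall>b\<in>B. t' b \<in> {-1..1}"
  proof
    fix b assume "b \<in> B"
    then have "-1 \<le> t b" "t b \<le> 1"
      using assms(4) by auto
    moreover have "0 \<le> s * (t b + 1) / (1 + s)"
      using \<open>0 \<le> s\<close> \<open>-1 \<le> t b\<close> by simp
    ultimately show "t' b \<in> {-1..1}"
      using \<open>0 \<le> s\<close> diff[of b] by (simp add: t'_def field_simps)
  qed
  have "B \<noteq> {}"
    using assms(3) by auto
  then have "1 \<le> card B"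
    using assms(1) by (simp add: Suc_le_eq card_gt_0_iff)
  show "\<forall>b\<in>B. t' b \<le> t b \<and> t b - t' b \<le> card B * s"
  proof
    fix b assume "b \<in> B"
    then have t: "-1 \<le> t b" "t b \<le> 1"
      using assms(4) by auto
    have "t b = s \<or> 2 \<le> real (card B)"
    proof (cases "card B = 1")
      case True
      then obtain b0 where "B = {b0}"
        by (auto simp: card_Suc_eq)
      then show ?thesis
        using assms(3) \<open>b \<in> B\<close> by (simp add: s_def)
    qed (use \<open>1 \<le> card B\<close> in auto)
    then have "s * (t b + 1) / (1 + s) \<le> card B * s"
      using \<open>1 \<le> card B\<close> by (intro zero_mean_shift_size_le[OF \<open>0 \<le> s\<close> t]) auto
    then have "t b - t' b \<le> card B * s"
      using diff[of b] by simp
    moreover have "0 \<le> t b - t' b"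
      using \<open>0 \<le> s\<close> t diff[of b] by simp
    ultimately show "t' b \<le> t b \<and> t b - t' b \<le> card B * s"
      by simp
  qed
qed

lemma zero_mean_shift:
  fixes \<mu> t :: "'a \<Rightarrow> real"
  assumes "finite B" "\<forall>b\<in>B. 0 \<le> \<mu> b" "(\<Sum>b\<in>B. \<mu> b) = 1" "\<forall>b\<in>B. t b \<in> {-1..1}"
  obtains t' where "\<forall>b\<in>B. t' b \<in> {-1..1}" "(\<Sum>b\<in>B. \<mu> b * t' b) = 0"
    "(\<forall>b\<in>B. t' b \<le> t b) \<or> (\<forall>b\<in>B. t b \<le> t' b)"
    "\<forall>b\<in>B. \<bar>t b - t' b\<bar> \<le> card B * \<bar>\<Sum>b\<in>B. \<mu> b * t b\<bar>"
proof (cases "0 \<le> (\<Sum>b\<in>B. \<mu> b * t b)")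
  case True
  with zero_mean_shift_nonneg[OF assms] obtain t' where
    "\<forall>b\<in>B. t' b \<in> {-1..1}" "(\<Sum>b\<in>B. \<mu> b * t' b) = 0"
    "\<forall>b\<in>B. t' b \<le> t b \<and> t b - t' b \<le> card B * (\<Sum>b\<in>B. \<mu> b * t b)"
    by blast
  with True show ?thesis
    by (intro that[of t']) auto
next
  case False
  have "\<forall>b\<in>B. - t b \<in> {-1..1}" "0 \<le> (\<Sum>b\<in>B. \<mu> b * - t b)"
    using assms(4) False by (auto simp: sum_negf)
  with zero_mean_shift_nonneg[OF assms(1-3), of "\<lambda>b. - t b"] obtain t' where
    "\<forall>b\<in>B. t' b \<in> {-1..1}" "(\<Sum>b\<in>B. \<mu> b * t' b) = 0"
    "\<forall>b\<in>B. t' b \<le> - t b \<and> - t b - t' b \<le> card B * (\<Sum>b\<in>B. \<mu> b * - t b)"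
    by blast
  with False show ?thesis
    by (intro that[of "\<lambda>b. - t' b"]) (auto simp: sum_negf)
qed

lemma finite_biases: "finite (set_pmf D) \<Longrightarrow> finite (biases D)"
  unfolding biases_def by (auto split: prod.splits)

lemma soundness_le_soundness_eps:
  fixes \<epsilon> :: real
  assumes "blueprint D \<mu>" and "0 \<le> \<epsilon>"
  shows "soundness D \<mu> \<le> soundness_eps \<epsilon> D \<mu>"
proof -
  have "{t. balanced D \<mu> t} \<subseteq> {t. almost_balanced \<epsilon> D \<mu> t}"
    using assms(2) by (auto simp: balanced_def almost_balanced_def)
  moreover have "(\<lambda>_. 0) \<in> {t. balanced D \<mu> t}"
    by (simp add: balanced_def threshold_def)
  moreover have "bdd_above (soundness_t D ` {t. almost_balanced \<epsilon> D \<mu> t})"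
    using assms(1) soundness_t_le_2
    by (intro bdd_aboveI[of _ 2]) (auto simp: blueprint_def almost_balanced_def)
  ultimately show ?thesis
    unfolding soundness_def soundness_eps_def by (intro cSUP_subset_mono) auto
qed

lemma soundness_eps_le_soundness_add:
  fixes \<epsilon> :: real
  assumes "blueprint D \<mu>" and "0 \<le> \<epsilon>"
  shows "soundness_eps \<epsilon> D \<mu> \<le> soundness D \<mu> + card (biases D) * \<epsilon>"
  unfolding soundness_eps_def
proof (rule cSUP_least)
  show "{t. almost_balanced \<epsilon> D \<mu> t} \<noteq> {}"
    using assms(2) by (auto simp: almost_balanced_def threshold_def intro!: exI[of _ "\<lambda>_. 0"])
next
  fix t assume "t \<in> {t. almost_balanced \<epsilon> D \<mu> t}"
  then have t: "threshold D t" "\<bar>\<Sum>b\<in>biases D. \<mu> b * t b\<bar> \<le> \<epsilon>"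
    by (simp_all add: almost_balanced_def)
  have fin: "finite (set_pmf D)" and valid: "\<forall>\<theta>\<in>set_pmf D. valid_config \<theta>"
    using assms(1) by (simp_all add: blueprint_def)
  obtain t' where t': "threshold D t'" "balanced D \<mu> t'"
    "(\<forall>b\<in>biases D. t' b \<le> t b) \<or> (\<forall>b\<in>biases D. t b \<le> t' b)"
    "\<forall>b\<in>biases D. \<bar>t b - t' b\<bar> \<le> card (biases D) * \<bar>\<Sum>b\<in>biases D. \<mu> b * t b\<bar>"
    using zero_mean_shift[OF finite_biases[OF fin], of \<mu> t] assms(1) t(1)
    by (auto simp: blueprint_def threshold_def balanced_def)
  have bound: "\<forall>b\<in>biases D. \<bar>t b - t' b\<bar> \<le> card (biases D) * \<epsilon>"
    using t'(4) t(2) by (meson mult_left_mono of_nat_0_le_iff order_trans)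
  have "soundness_t D t \<le> soundness_t D t' + card (biases D) * \<epsilon>"
    by (rule soundness_t_le_comonotone_shift[OF fin valid t(1) t'(1,3) bound])
  also have "soundness_t D t' \<le> soundness D \<mu>"
    unfolding soundness_def using t'(2) fin soundness_t_le_2
    by (intro cSUP_upper bdd_aboveI[of _ 2]) (auto simp: balanced_def)
  finally show "soundness_t D t \<le> soundness D \<mu> + card (biases D) * \<epsilon>"
    by simp
qed

theorem corollary2p16:
  fixes D :: "config pmf" and \<mu> :: "real \<Rightarrow> real" and \<epsilon> :: real
  assumes "blueprint D \<mu>" and "\<epsilon> > 0"
  shows "soundness D \<mu> \<le> soundness_eps \<epsilon> D \<mu> \<and>
         soundness_eps \<epsilon> D \<mu> \<le> soundness D \<mu> + real (card (biases D)) * \<epsilon>"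
  using assms soundness_le_soundness_eps soundness_eps_le_soundness_add by simp

end
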